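(* Let $\Sigma=(I,X,\mathcal U,\phi,Y,h)$ be a forward complete control system with outputs. Then $\Sigma$ is OUGS if and only if $\Sigma$ is OUGB and OULS.
   Context: Let $I\in\{\mathbb N_0,\mathbb R_0^+\}$. A forward complete control system with outputs $\Sigma=(I,X,\mathcal U,\phi,Y,h)$ consists of: a normed space $(X,\|\cdot\|_X)$; a vector space $U$ and a normed linear subspace $(\mathcal U,\|\cdot\|_{\mathcal U})$ of $\{u:I\to U\}$ such that for all $u\in\mathcal U,\tau\in I$, $u(\cdot+\tau)\in\mathcal U$ with $\|u(\cdot+\tau)\|_{\mathcal U}\le\|u\|_{\mathcal U}$, and for $t_2\ge t_1\ge 0$ the function $u|_{[t_1,t_2]}$ ($u$ on $[t_1,t_2]$, $0$ elsewhere) lies in $\mathcal U$ with norm $\le\|u\|_{\mathcal U}$; a map $\phi:I\times X\times\mathcal U\to X$ with $\phi(0,x,u)=x$, causality, and cocycle property $\phi(t+s,x,u)=\phi(s,\phi(t,x,u),u(t+\cdot))$; a normed space $Y$ and $h:X\times U\to Y$. Write $y(t,x,u)=h(\phi(t,x,u),u(t))$, $B_r=\{x:\|x\|_X<r\}$, $B_{r,\mathcal U}=\{u:\|u\|_{\mathcal U}<r\}$; $\mathcal K_\infty$ = unbounded continuous strictly increasing functions $\mathbb R_0^+\to\mathbb R_0^+$ vanishing at $0$. OUGS: $\exists\sigma,\gamma\in\mathcal K_\infty$ with $\|y(t,x,u)\|_Y\le\sigma(\|x\|_X)+\gamma(\|u\|_{\mathcal U})$ for all $x\in X,u\in\mathcal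 U,t\in I$. OULS: $\exists r>0,\sigma,\gamma\in\mathcal K_\infty$ with the same inequality for all $x\in B_r,u\in B_{r,\mathcal U},t\in I$. OUGB: $\exists\sigma,\gamma\in\mathcal K_\infty,c>0$ with $\|y(t,x,u)\|_Y\le\sigma(\|x\|_X)+\gamma(\|u\|_{\mathcal U})+c$ for all $x,u,t$. *)

theory Defs
  imports "HOL-Analysis.Analysis"
begin

text \<open>Time domain I: either the natural numbers (embedded in the reals) or the
nonnegative reals.  Inputs are functions real => U that vanish outside I.\<close>

definition time_domain :: "real set \<Rightarrow> bool" where
  "time_domain T \<longleftrightarrow> T = range real \<or> T = {0..}"

definition shift_input :: "real set \<Rightarrow> (real \<Rightarrow> 'u::real_vector) \<Rightarrow> real \<Rightarrow> (real \<Rightarrow> 'u)" where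
  "shift_input T u \<tau> = (\<lambda>t. if t \<in> T then u (t + \<tau>) else 0)"

definition restrict_input :: "real set \<Rightarrow> (real \<Rightarrow> 'u::real_vector) \<Rightarrow> real \<Rightarrow> real \<Rightarrow> (real \<Rightarrow> 'u)" where
  "restrict_input T u t1 t2 = (\<lambda>t. if t \<in> T \<and> t1 \<le> t \<and> t \<le> t2 then u t else 0)"

text \<open>Uset is a linear subspace of functions T -> U (represented as functions vanishing
outside T) with norm nU.\<close>

definition control_system_out ::
  "real set \<Rightarrow> (real \<Rightarrow> 'u::real_vector) set \<Rightarrow> ((real \<Rightarrow> 'u) \<Rightarrow> real)
   \<Rightarrow> (real \<Rightarrow> 'x::real_normed_vector \<Rightarrow> (real \<Rightarrow> 'u) \<Rightarrow> 'x)
   \<Rightarrow> ('x \<Rightarrow> 'u \<Rightarrow> 'y::real_normed_vector) \<Rightarrow> bool" where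
  "control_system_out T Uset nU phi h \<longleftrightarrow>
     time_domain T \<and>
     \<comment> \<open>inputs are functions on T\<close>
     (\<forall>u\<in>Uset. \<forall>t. t \<notin> T \<longrightarrow> u t = 0) \<and>
     \<comment> \<open>linear subspace\<close>
     (\<lambda>t. 0) \<in> Uset \<and>
     (\<forall>u\<in>Uset. \<forall>v\<in>Uset. (\<lambda>t. u t + v t) \<in> Uset) \<and>
     (\<forall>u\<in>Uset. \<forall>a::real. (\<lambda>t. a *\<^sub>R u t) \<in> Uset) \<and>
     \<comment> \<open>norm axioms\<close>
     (\<forall>u\<in>Uset. 0 \<le> nU u) \<and>
     (\<forall>u\<in>Uset. nU u = 0 \<longleftrightarrow> u = (\<lambda>t. 0)) \<and>
     (\<forall>u\<in>Uset. \<forall>a::real. nU (\<lambda>t. a *\<^sub>R u t) = \<bar>a\<bar> * nU u) \<and>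
     (\<forall>u\<in>Uset. \<forall>v\<in>Uset. nU (\<lambda>t. u t + v t) \<le> nU u + nU v) \<and>
     \<comment> \<open>shift invariance\<close>
     (\<forall>u\<in>Uset. \<forall>\<tau>\<in>T. shift_input T u \<tau> \<in> Uset \<and> nU (shift_input T u \<tau>) \<le> nU u) \<and>
     \<comment> \<open>restriction\<close>
     (\<forall>u\<in>Uset. \<forall>t1 t2. 0 \<le> t1 \<and> t1 \<le> t2 \<longrightarrow>
        restrict_input T u t1 t2 \<in> Uset \<and> nU (restrict_input T u t1 t2) \<le> nU u) \<and>
     \<comment> \<open>identity property\<close>
     (\<forall>x. \<forall>u\<in>Uset. phi 0 x u = x) \<and>
     \<comment> \<open>causality\<close>
     (\<forall>x. \<forall>u\<in>Uset. \<forall>v\<in>Uset. \<forall>t\<in>T.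
        (\<forall>s\<in>T. s \<le> t \<longrightarrow> u s = v s) \<longrightarrow> phi t x u = phi t x v) \<and>
     \<comment> \<open>cocycle property\<close>
     (\<forall>x. \<forall>u\<in>Uset. \<forall>t\<in>T. \<forall>s\<in>T.
        phi (t + s) x u = phi s (phi t x u) (shift_input T u t))"

definition sys_output :: "(real \<Rightarrow> 'x \<Rightarrow> (real \<Rightarrow> 'u) \<Rightarrow> 'x) \<Rightarrow> ('x \<Rightarrow> 'u \<Rightarrow> 'y)
   \<Rightarrow> real \<Rightarrow> 'x \<Rightarrow> (real \<Rightarrow> 'u) \<Rightarrow> 'y" where
  "sys_output phi h t x u = h (phi t x u) (u t)"

definition Kinf :: "(real \<Rightarrow> real) \<Rightarrow> bool" where
  "Kinf f \<longleftrightarrow> continuous_on {0..} f \<and> strict_mono_on {0..} f \<and> f 0 = 0 \<and>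
     (\<forall>M. \<exists>s\<ge>0. f s > M)"

definition OUGS :: "real set \<Rightarrow> (real \<Rightarrow> 'u::real_vector) set \<Rightarrow> ((real \<Rightarrow> 'u) \<Rightarrow> real)
   \<Rightarrow> (real \<Rightarrow> 'x::real_normed_vector \<Rightarrow> (real \<Rightarrow> 'u) \<Rightarrow> 'x)
   \<Rightarrow> ('x \<Rightarrow> 'u \<Rightarrow> 'y::real_normed_vector) \<Rightarrow> bool" where
  "OUGS T Uset nU phi h \<longleftrightarrow> (\<exists>\<sigma> \<gamma>. Kinf \<sigma> \<and> Kinf \<gamma> \<and>
     (\<forall>x. \<forall>u\<in>Uset. \<forall>t\<in>T. norm (sys_output phi h t x u) \<le> \<sigma> (norm x) + \<gamma> (nU u)))"

definition OULS :: "real set \<Rightarrow> (real \<Rightarrow> 'u::real_vector) set \<Rightarrow> ((real \<Rightarrow> 'u) \<Rightarrow> real)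
   \<Rightarrow> (real \<Rightarrow> 'x::real_normed_vector \<Rightarrow> (real \<Rightarrow> 'u) \<Rightarrow> 'x)
   \<Rightarrow> ('x \<Rightarrow> 'u \<Rightarrow> 'y::real_normed_vector) \<Rightarrow> bool" where
  "OULS T Uset nU phi h \<longleftrightarrow> (\<exists>r>0. \<exists>\<sigma> \<gamma>. Kinf \<sigma> \<and> Kinf \<gamma> \<and>
     (\<forall>x. norm x < r \<longrightarrow> (\<forall>u\<in>Uset. nU u < r \<longrightarrow> (\<forall>t\<in>T.
        norm (sys_output phi h t x u) \<le> \<sigma> (norm x) + \<gamma> (nU u)))))"

definition OUGB :: "real set \<Rightarrow> (real \<Rightarrow> 'u::real_vector) set \<Rightarrow> ((real \<Rightarrow> 'u) \<Rightarrow> real)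
   \<Rightarrow> (real \<Rightarrow> 'x::real_normed_vector \<Rightarrow> (real \<Rightarrow> 'u) \<Rightarrow> 'x)
   \<Rightarrow> ('x \<Rightarrow> 'u \<Rightarrow> 'y::real_normed_vector) \<Rightarrow> bool" where
  "OUGB T Uset nU phi h \<longleftrightarrow> (\<exists>\<sigma> \<gamma> c. Kinf \<sigma> \<and> Kinf \<gamma> \<and> c > 0 \<and>
     (\<forall>x. \<forall>u\<in>Uset. \<forall>t\<in>T. norm (sys_output phi h t x u) \<le> \<sigma> (norm x) + \<gamma> (nU u) + c))"

end

theory Submission
  imports Defs
begin

text \<open>Only the converse direction has content. Off the ball of radius \<open>r\<close> on which the local
  estimate holds, \<open>\<parallel>x\<parallel> \<ge> r\<close> or \<open>\<parallel>u\<parallel> \<ge> r\<close>, so the constant \<open>c\<close> of the bound estimate is dominated by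
  the linear gains \<open>(c/r) \<parallel>x\<parallel> + (c/r) \<parallel>u\<parallel>\<close>. Hence the sums of the gains of both estimates and of
  these linear gains form a global estimate.\<close>

lemma Kinf_nonneg: "Kinf f \<Longrightarrow> 0 \<le> s \<Longrightarrow> 0 \<le> f s"
  unfolding Kinf_def strict_mono_on_def
  by (metis atLeast_iff order.strict_iff_order order_refl)

lemma Kinf_add:
  assumes "Kinf f" "Kinf g"
  shows "Kinf (\<lambda>s. f s + g s)"
proof -
  have "continuous_on {0..} (\<lambda>s. f s + g s)"
    using assms unfolding Kinf_def by (intro continuous_on_add) auto
  moreover have "strict_mono_on {0..} (\<lambda>s. f s + g s)"
    using assms unfolding Kinf_def strict_mono_on_def by (meson add_strict_mono)
  moreover have "\<exists>s\<ge>0. f s + g s > M" for M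
  proof -
    obtain s where "s \<ge> 0" "f s > M"
      using assms(1) unfolding Kinf_def by blast
    with Kinf_nonneg[OF assms(2), of s] show ?thesis by force
  qed
  ultimately show ?thesis
    using assms unfolding Kinf_def by simp
qed

lemma Kinf_linear:
  assumes "0 < (a::real)"
  shows "Kinf (\<lambda>s. a * s)"
proof -
  have "\<exists>s\<ge>0. a * s > M" for M
  proof (intro exI conjI)
    show "a * (\<bar>M\<bar> / a + 1) > M"
      using assms by (simp add: distrib_left)
  qed (use assms in simp)
  then show ?thesis
    using assms unfolding Kinf_def strict_mono_on_def by (auto intro!: continuous_intros)
qed

lemma const_le_linear_outside_ball:
  fixes a b c r :: real
  assumes "0 \<le> a" "0 \<le> b" "0 < r" "0 \<le> c" "\<not> (a < r \<and> b < r)"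
  shows "c \<le> c / r * a + c / r * b"
proof -
  have "c = c / r * r" using \<open>0 < r\<close> by simp
  also have "\<dots> \<le> c / r * max a b"
    using assms by (intro mult_left_mono) auto
  also have "\<dots> \<le> c / r * a + c / r * b"
    using assms by (simp add: max_def)
  finally show ?thesis .
qed

lemma OUGS_imp_OUGB: "OUGS T Uset nU phi h \<Longrightarrow> OUGB T Uset nU phi h"
  unfolding OUGS_def OUGB_def
  by (metis (no_types, lifting) add_increasing2 zero_less_one less_imp_le)

lemma OUGS_imp_OULS: "OUGS T Uset nU phi h \<Longrightarrow> OULS T Uset nU phi h"
  unfolding OUGS_def OULS_def by (metis zero_less_one)

lemma OUGB_OULS_imp_OUGS:
  assumes nU_nonneg: "\<forall>u\<in>Uset. 0 \<le> nU u"
    and "OUGB T Uset nU phi h" "OULS T Uset nU phi h"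
  shows "OUGS T Uset nU phi h"
proof -
  obtain \<sigma>\<^sub>b \<gamma>\<^sub>b c where "Kinf \<sigma>\<^sub>b" "Kinf \<gamma>\<^sub>b" "0 < c" and bound:
    "\<And>x u t. u \<in> Uset \<Longrightarrow> t \<in> T \<Longrightarrow>
      norm (sys_output phi h t x u) \<le> \<sigma>\<^sub>b (norm x) + \<gamma>\<^sub>b (nU u) + c"
    using \<open>OUGB T Uset nU phi h\<close> unfolding OUGB_def by blast
  obtain r \<sigma>\<^sub>l \<gamma>\<^sub>l where "0 < r" "Kinf \<sigma>\<^sub>l" "Kinf \<gamma>\<^sub>l" and local:
    "\<And>x u t. norm x < r \<Longrightarrow> u \<in> Uset \<Longrightarrow> nU u < r \<Longrightarrow> t \<in> T \<Longrightarrow>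
      norm (sys_output phi h t x u) \<le> \<sigma>\<^sub>l (norm x) + \<gamma>\<^sub>l (nU u)"
    using \<open>OULS T Uset nU phi h\<close> unfolding OULS_def by blast
  define \<sigma> where "\<sigma> s = \<sigma>\<^sub>b s + \<sigma>\<^sub>l s + c / r * s" for s
  define \<gamma> where "\<gamma> s = \<gamma>\<^sub>b s + \<gamma>\<^sub>l s + c / r * s" for s
  have "Kinf (\<lambda>s. c / r * s)"
    using \<open>0 < c\<close> \<open>0 < r\<close> by (intro Kinf_linear) simp
  then have "Kinf \<sigma>" "Kinf \<gamma>"
    unfolding \<sigma>_def \<gamma>_def using \<open>Kinf \<sigma>\<^sub>b\<close> \<open>Kinf \<gamma>\<^sub>b\<close> \<open>Kinf \<sigma>\<^sub>l\<close> \<open>Kinf \<gamma>\<^sub>l\<close>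
    by (simp_all only: Kinf_add)
  moreover have "norm (sys_output phi h t x u) \<le> \<sigma> (norm x) + \<gamma> (nU u)"
    if "u \<in> Uset" "t \<in> T" for x u t
  proof -
    have "0 \<le> nU u" using nU_nonneg \<open>u \<in> Uset\<close> by blast
    then have gains_nonneg: "0 \<le> \<sigma>\<^sub>b (norm x)" "0 \<le> \<sigma>\<^sub>l (norm x)" "0 \<le> \<gamma>\<^sub>b (nU u)" "0 \<le> \<gamma>\<^sub>l (nU u)"
      "0 \<le> c / r * norm x" "0 \<le> c / r * nU u"
      using Kinf_nonneg \<open>Kinf \<sigma>\<^sub>b\<close> \<open>Kinf \<sigma>\<^sub>l\<close> \<open>Kinf \<gamma>\<^sub>b\<close> \<open>Kinf \<gamma>\<^sub>l\<close> \<open>0 < c\<close> \<open>0 < r\<close> by auto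
    show ?thesis
    proof (cases "norm x < r \<and> nU u < r")
      case True
      then show ?thesis
        using local[of x u t] that gains_nonneg unfolding \<sigma>_def \<gamma>_def by linarith
    next
      case False
      then have "c \<le> c / r * norm x + c / r * nU u"
        using const_le_linear_outside_ball \<open>0 \<le> nU u\<close> \<open>0 < r\<close> \<open>0 < c\<close> by simp
      then show ?thesis
        using bound[of u t x] that gains_nonneg unfolding \<sigma>_def \<gamma>_def by linarith
    qed
  qed
  ultimately show ?thesis
    unfolding OUGS_def by blast
qed

theorem lemma8:
  fixes T :: "real set" and Uset :: "(real \<Rightarrow> 'u::real_vector) set"
    and nU :: "(real \<Rightarrow> 'u) \<Rightarrow> real"
    and phi :: "real \<Rightarrow> 'x::real_normed_vector \<Rightarrow> (real \<Rightarrow> 'u) \<Rightarrow> 'x"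
    and h :: "'x \<Rightarrow> 'u \<Rightarrow> 'y::real_normed_vector"
  assumes "control_system_out T Uset nU phi h"
  shows "OUGS T Uset nU phi h \<longleftrightarrow> OUGB T Uset nU phi h \<and> OULS T Uset nU phi h"
proof -
  have "\<forall>u\<in>Uset. 0 \<le> nU u"
    using assms unfolding control_system_out_def by (elim conjE)
  then show ?thesis
    using OUGS_imp_OUGB OUGS_imp_OULS OUGB_OULS_imp_OUGS by blast
qed

end
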